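(* Let $G$ be a torsion-free group, $\mathbb{F}$ a field, $\alpha$ a zero divisor in $\mathbb{F}[G]$ with $|supp(\alpha)|=4$ and $|S_\alpha|=12$, and let $\beta$ be a non-zero element of $\mathbb{F}[G]$ with $\alpha\beta=0$. Then $Z(\alpha,\beta)$ is the induced subgraph on the vertex set $supp(\beta)$ of the Cayley graph of $G$ with respect to $S_\alpha$.
   Context: $supp(\gamma)=\{x\in G:\gamma_x\ne0\}$; $S_\alpha=\{h^{-1}h':h\ne h',\ h,h'\in supp(\alpha)\}$. The zero-divisor graph $Z(\alpha,\beta)$ is the multigraph with vertex set $supp(\beta)$ whose edges are the sets $\{(h,h',g,g'),(h',h,g',g)\}$ with $h,h'\in supp(\alpha)$, $g,g'\in supp(\beta)$, $g\ne g'$, $hg=h'g'$, each joining $g$ and $g'$. The Cayley graph of $G$ with respect to an inverse-closed $S\not\ni1$ is the simple graph on $G$ in which $x,y$ are adjacent iff $xy^{-1}\in S$. *)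

theory Defs
  imports "HOL-Algebra.Group"
begin

text \<open>Group algebra F[G]: finitely supported functions from the carrier of G to a field.
  Elements are represented as functions 'g => 'f vanishing outside a finite subset of carrier G.\<close>

definition supp :: "('g \<Rightarrow> 'f::zero) \<Rightarrow> 'g set" where
  "supp a = {x. a x \<noteq> 0}"

definition in_group_ring :: "('g, 'b) monoid_scheme \<Rightarrow> ('g \<Rightarrow> 'f::zero) \<Rightarrow> bool" where
  "in_group_ring G a \<longleftrightarrow> finite (supp a) \<and> supp a \<subseteq> carrier G"

definition gr_mult :: "('g, 'b) monoid_scheme \<Rightarrow> ('g \<Rightarrow> 'f::field) \<Rightarrow> ('g \<Rightarrow> 'f) \<Rightarrow> 'g \<Rightarrow> 'f" where
  "gr_mult G a b x = (if x \<in> carrier G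
      then (\<Sum>h\<in>supp a. a h * b (inv\<^bsub>G\<^esub> h \<otimes>\<^bsub>G\<^esub> x)) else 0)"

definition zero_divisor :: "('g, 'b) monoid_scheme \<Rightarrow> ('g \<Rightarrow> 'f::field) \<Rightarrow> bool" where
  "zero_divisor G a \<longleftrightarrow> in_group_ring G a \<and> a \<noteq> (\<lambda>_. 0) \<and>
     (\<exists>b. in_group_ring G b \<and> b \<noteq> (\<lambda>_. 0) \<and>
          (gr_mult G a b = (\<lambda>_. 0) \<or> gr_mult G b a = (\<lambda>_. 0)))"

definition torsion_free :: "('g, 'b) monoid_scheme \<Rightarrow> bool" where
  "torsion_free G \<longleftrightarrow> (\<forall>x\<in>carrier G. x \<noteq> \<one>\<^bsub>G\<^esub> \<longrightarrow> (\<forall>n::nat. n > 0 \<longrightarrow> x [^]\<^bsub>G\<^esub> n \<noteq> \<one>\<^bsub>G\<^esub>))"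

definition S_set :: "('g, 'b) monoid_scheme \<Rightarrow> ('g \<Rightarrow> 'f::zero) \<Rightarrow> 'g set" where
  "S_set G a = {inv\<^bsub>G\<^esub> h \<otimes>\<^bsub>G\<^esub> h' | h h'. h \<noteq> h' \<and> h \<in> supp a \<and> h' \<in> supp a}"

definition zd_edges :: "('g, 'b) monoid_scheme \<Rightarrow> ('g \<Rightarrow> 'f::zero) \<Rightarrow> ('g \<Rightarrow> 'f) \<Rightarrow> ('g \<times> 'g \<times> 'g \<times> 'g) set set" where
  "zd_edges G a b = {{(h, h', g, g'), (h', h, g', g)} | h h' g g'.
      h \<in> supp a \<and> h' \<in> supp a \<and> g \<in> supp b \<and> g' \<in> supp b \<and> g \<noteq> g' \<and>
      h \<otimes>\<^bsub>G\<^esub> g = h' \<otimes>\<^bsub>G\<^esub> g'}"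

definition edge_ends :: "('g \<times> 'g \<times> 'g \<times> 'g) set \<Rightarrow> 'g set" where
  "edge_ends e = (\<lambda>(h, h', g, g'). g) ` e"

definition zd_mult :: "('g, 'b) monoid_scheme \<Rightarrow> ('g \<Rightarrow> 'f::zero) \<Rightarrow> ('g \<Rightarrow> 'f) \<Rightarrow> 'g \<Rightarrow> 'g \<Rightarrow> nat" where
  "zd_mult G a b x y = card {e \<in> zd_edges G a b. edge_ends e = {x, y}}"

definition cayley_adj :: "('g, 'b) monoid_scheme \<Rightarrow> 'g set \<Rightarrow> 'g \<Rightarrow> 'g \<Rightarrow> bool" where
  "cayley_adj G S x y \<longleftrightarrow> x \<otimes>\<^bsub>G\<^esub> inv\<^bsub>G\<^esub> y \<in> S"

end

theory Submission
  imports Defs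
begin

text \<open>An edge of \<open>Z(\<alpha>,\<beta>)\<close> joining \<open>x\<close> and \<open>y\<close> is the same as an ordered pair \<open>h \<noteq> h'\<close>
  in \<open>supp \<alpha>\<close> with \<open>h\<^sup>-\<^sup>1 h' = x y\<^sup>-\<^sup>1\<close>, so the multiplicity of \<open>{x, y}\<close> counts the pairs
  that the map \<open>(h, h') \<mapsto> h\<^sup>-\<^sup>1 h'\<close> sends to \<open>x y\<^sup>-\<^sup>1\<close>. There are \<open>4 \<cdot> 3 = 12\<close> such pairs,
  so \<open>|S\<^sub>\<alpha>| = 12\<close> says exactly that this map is injective; hence the multiplicity is \<open>1\<close>
  if \<open>x y\<^sup>-\<^sup>1 \<in> S\<^sub>\<alpha>\<close> and \<open>0\<close> otherwise.\<close>

lemma (in group) mult_eq_mult_iff_inv_mult_eq_mult_inv: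
  assumes "k \<in> carrier G" "k' \<in> carrier G" "g \<in> carrier G" "g' \<in> carrier G"
  shows "k \<otimes> g = k' \<otimes> g' \<longleftrightarrow> inv k \<otimes> k' = g \<otimes> inv g'"
proof -
  have "inv k \<otimes> k' = g \<otimes> inv g' \<longleftrightarrow> g = (inv k \<otimes> k') \<otimes> g'"
    using inv_solve_right[of "inv k \<otimes> k'" g g'] assms by auto
  also have "\<dots> \<longleftrightarrow> g = inv k \<otimes> (k' \<otimes> g')"
    using assms by (simp add: m_assoc)
  also have "\<dots> \<longleftrightarrow> k' \<otimes> g' = k \<otimes> g"
    using inv_solve_left[of g k "k' \<otimes> g'"] assms by auto
  finally show ?thesis by auto
qed

lemma card_off_diagonal:
  assumes "finite A"
  shows "card {(h, h'). h \<noteq> h' \<and> h \<in> A \<and> h' \<in> A} = card A * (card A - 1)"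
proof -
  have "{(h, h'). h \<noteq> h' \<and> h \<in> A \<and> h' \<in> A} = A \<times> A - (\<lambda>a. (a, a)) ` A" by auto
  moreover have "card ((\<lambda>a. (a, a)) ` A) = card A" by (simp add: card_image inj_on_def)
  moreover have "(\<lambda>a. (a, a)) ` A \<subseteq> A \<times> A" by auto
  ultimately show ?thesis
    using assms by (simp add: card_Diff_subset card_cartesian_product diff_mult_distrib2)
qed

lemma card_fibre_of_inj_on:
  assumes "inj_on f P"
  shows "card {p \<in> P. f p = s} = (if s \<in> f ` P then 1 else 0)"
proof (cases "s \<in> f ` P")
  case True
  then obtain p where "p \<in> P" "s = f p" by blast
  then have "{q \<in> P. f q = s} = {p}" using assms by (auto dest: inj_onD)
  then show ?thesis using True by simp
next
  case False
  then have "{q \<in> P. f q = s} = {}" by auto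
  then show ?thesis using False by (simp only: card.empty if_False)
qed

lemma (in group) inj_on_inv_mult_if_card_S_set:
  assumes "finite (supp a)"
    and "card (S_set G a) = card (supp a) * (card (supp a) - 1)"
  shows "inj_on (\<lambda>(h, h'). inv h \<otimes> h') {(h, h'). h \<noteq> h' \<and> h \<in> supp a \<and> h' \<in> supp a}"
    (is "inj_on ?f ?P")
proof (rule eq_card_imp_inj_on)
  show "finite ?P"
    by (rule finite_subset[of _ "supp a \<times> supp a"]) (use assms(1) in auto)
  have "S_set G a = ?f ` ?P" unfolding S_set_def by auto
  then show "card (?f ` ?P) = card ?P"
    using assms by (simp add: card_off_diagonal)
qed

lemma (in group) zd_edges_joining:
  assumes "supp a \<subseteq> carrier G" "supp b \<subseteq> carrier G"
    and "x \<in> supp b" "y \<in> supp b" "x \<noteq> y"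
  shows "{e \<in> zd_edges G a b. edge_ends e = {x, y}} =
    (\<lambda>(h, h'). {(h, h', x, y), (h', h, y, x)}) `
      {(h, h'). h \<noteq> h' \<and> h \<in> supp a \<and> h' \<in> supp a \<and> inv h \<otimes> h' = x \<otimes> inv y}"
    (is "?E = ?edge ` ?P")
proof
  show "?E \<subseteq> ?edge ` ?P"
  proof
    fix e assume "e \<in> ?E"
    then obtain k k' g g' where e: "e = {(k, k', g, g'), (k', k, g', g)}"
      and k: "k \<in> supp a" "k' \<in> supp a" and g: "g \<in> supp b" "g' \<in> supp b" "g \<noteq> g'"
      and eq: "k \<otimes> g = k' \<otimes> g'" and ends: "edge_ends e = {x, y}"
      unfolding zd_edges_def by blast
    have kc: "k \<in> carrier G" "k' \<in> carrier G" and gc: "g \<in> carrier G" "g' \<in> carrier G"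
      using k g assms(1,2) by auto
    have "k \<noteq> k'" using eq kc gc g(3) by auto
    have inv_eq: "inv k \<otimes> k' = g \<otimes> inv g'" "inv k' \<otimes> k = g' \<otimes> inv g"
      using eq mult_eq_mult_iff_inv_mult_eq_mult_inv kc gc by metis+
    have "{g, g'} = {x, y}" using ends e unfolding edge_ends_def by auto
    then consider "g = x" "g' = y" | "g = y" "g' = x" using g(3) by (metis doubleton_eq_iff)
    then show "e \<in> ?edge ` ?P"
    proof cases
      case 1
      then show ?thesis using e k \<open>k \<noteq> k'\<close> inv_eq(1) by (intro rev_image_eqI[of "(k, k')"]) auto
    next
      case 2
      then show ?thesis using e k \<open>k \<noteq> k'\<close> inv_eq(2) by (intro rev_image_eqI[of "(k', k)"]) auto
    qed
  qed
next
  show "?edge ` ?P \<subseteq> ?E"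
  proof (rule image_subsetI)
    fix p assume "p \<in> ?P"
    then obtain h h' where p: "p = (h, h')"
      and h: "h \<noteq> h'" "h \<in> supp a" "h' \<in> supp a" "inv h \<otimes> h' = x \<otimes> inv y"
      by blast
    then have "h \<otimes> x = h' \<otimes> y"
      using mult_eq_mult_iff_inv_mult_eq_mult_inv assms by (meson subsetD)
    then have "?edge p \<in> zd_edges G a b"
      unfolding zd_edges_def p using h assms(3-5) by blast
    moreover have "edge_ends (?edge p) = {x, y}" unfolding edge_ends_def p by auto
    ultimately show "?edge p \<in> ?E" by simp
  qed
qed

lemma (in group) zd_mult_eq_card_pairs:
  assumes "supp a \<subseteq> carrier G" "supp b \<subseteq> carrier G"
    and "x \<in> supp b" "y \<in> supp b" "x \<noteq> y"
  shows "zd_mult G a b x y =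
    card {(h, h'). h \<noteq> h' \<and> h \<in> supp a \<and> h' \<in> supp a \<and> inv h \<otimes> h' = x \<otimes> inv y}"
proof -
  have "inj (\<lambda>(h, h'). {(h, h', x, y), (h', h, y, x)})"
    using assms(5) by (auto intro!: injI simp: doubleton_eq_iff)
  then show ?thesis
    unfolding zd_mult_def zd_edges_joining[OF assms]
    by (rule card_image[OF inj_on_subset]) simp
qed

theorem mainTheorem10:
  fixes G :: "('g, 'b) monoid_scheme" and \<alpha> \<beta> :: "'g \<Rightarrow> 'f::field"
  assumes "group G" and "torsion_free G"
    and "zero_divisor G \<alpha>" and "card (supp \<alpha>) = 4" and "card (S_set G \<alpha>) = 12"
    and "in_group_ring G \<beta>" and "\<beta> \<noteq> (\<lambda>_. 0)" and "gr_mult G \<alpha> \<beta> = (\<lambda>_. 0)"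
  shows "\<forall>x\<in>supp \<beta>. \<forall>y\<in>supp \<beta>. x \<noteq> y \<longrightarrow>
           zd_mult G \<alpha> \<beta> x y = (if cayley_adj G (S_set G \<alpha>) x y then 1 else 0)"
proof (intro ballI impI)
  interpret group G by fact
  fix x y assume xy: "x \<in> supp \<beta>" "y \<in> supp \<beta>" "x \<noteq> y"
  have supp_\<alpha>: "supp \<alpha> \<subseteq> carrier G" "finite (supp \<alpha>)"
    using assms(3) by (auto simp: zero_divisor_def in_group_ring_def)
  have supp_\<beta>: "supp \<beta> \<subseteq> carrier G" using assms(6) by (simp add: in_group_ring_def)
  let ?P = "{(h, h'). h \<noteq> h' \<and> h \<in> supp \<alpha> \<and> h' \<in> supp \<alpha>}"
  let ?f = "\<lambda>(h, h'). inv\<^bsub>G\<^esub> h \<otimes>\<^bsub>G\<^esub> h'"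
  have "inj_on ?f ?P"
    by (rule inj_on_inv_mult_if_card_S_set) (simp_all add: supp_\<alpha>(2) assms(4,5))
  have S_image: "S_set G \<alpha> = ?f ` ?P" unfolding S_set_def by auto
  have "zd_mult G \<alpha> \<beta> x y = card {p \<in> ?P. ?f p = x \<otimes>\<^bsub>G\<^esub> inv\<^bsub>G\<^esub> y}"
    unfolding zd_mult_eq_card_pairs[OF supp_\<alpha>(1) supp_\<beta> xy]
    by (rule arg_cong[where f = card]) auto
  also have "\<dots> = (if x \<otimes>\<^bsub>G\<^esub> inv\<^bsub>G\<^esub> y \<in> ?f ` ?P then 1 else 0)"
    by (rule card_fibre_of_inj_on) fact
  finally show "zd_mult G \<alpha> \<beta> x y = (if cayley_adj G (S_set G \<alpha>) x y then 1 else 0)"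
    unfolding cayley_adj_def S_image .
qed

end
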